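(* Let $G_1$ be a graph isomorphic to a minor of a weakly 4-connected graph $H$. Let $P=\{p_1,p_2\}$, $Q=\{q_1,q_2,q_3\}$ and $R$ form a partition of $V(G_1)$ such that $G_1$ contains all edges between $P$ and $Q$, no edge has both ends in $Q$, $|R|\ge2$, and $(P\cup Q,\,Q\cup R)$ is a non-trivial separation of $G_1$ of order three. Then $H$ has a minor isomorphic to a graph $G_1^+$ obtained from $G_1$ by either (1) adding an edge between $p_i$ and $r$ for some $i\in\{1,2\}$ and some $r\in R$, or (2) splitting $q_j$, for some $j\in\{1,2,3\}$, into two adjacent vertices $q_j^1,q_j^2$ such that $q_j^1$ is adjacent to $p_1$ and $q_j^2$ is adjacent to $p_2$.
   Context: Graphs are finite and simple. A separation of $G$ is a pair $(A,B)$ of subsets of $V(G)$ with $A\cup B=V(G)$ and no edge between $A-B$ and $B-A$; its order is $|A\cap B|$; it is non-trivial if $A\ne V(G)\ne B$. A graph is weakly 4-connected if it is 3-connected, has at least five vertices, and for every separation $(A,B)$ of order at most three one of $G[A]$, $G[B]$ has at most four edges. Splitting a vertex $v$: for a partition $(N_1,N_2)$ of the neighbours of $v$ with $|N_1|,|N_2|\ge2$, replace $v$ by two adjacent new vertices $v_1,v_2$ with $v_i$ adjacent to exactly the vertices of $N_i$. *)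

theory Defs
  imports Main
begin

definition simple_graph :: "'a set \<Rightarrow> 'a set set \<Rightarrow> bool" where
  "simple_graph V E \<longleftrightarrow> finite V \<and>
     (\<forall>e\<in>E. \<exists>u v. u \<noteq> v \<and> u \<in> V \<and> v \<in> V \<and> e = {u, v})"

definition connected_in :: "'a set set \<Rightarrow> 'a set \<Rightarrow> bool" where
  "connected_in E S \<longleftrightarrow> S \<noteq> {} \<and>
     (\<forall>u\<in>S. \<forall>v\<in>S. (u, v) \<in> {(x, y). {x, y} \<in> E \<and> x \<in> S \<and> y \<in> S}\<^sup>*)"

definition k_connected :: "nat \<Rightarrow> 'a set \<Rightarrow> 'a set set \<Rightarrow> bool" where
  "k_connected k V E \<longleftrightarrow> card V > k \<and>
     (\<forall>X. X \<subseteq> V \<and> card X < k \<longrightarrow> connected_in E (V - X))"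

definition separation :: "'a set \<Rightarrow> 'a set set \<Rightarrow> 'a set \<Rightarrow> 'a set \<Rightarrow> bool" where
  "separation V E A B \<longleftrightarrow> A \<subseteq> V \<and> B \<subseteq> V \<and> A \<union> B = V \<and>
     (\<forall>u\<in>A - B. \<forall>v\<in>B - A. {u, v} \<notin> E)"

definition sep_order :: "'a set \<Rightarrow> 'a set \<Rightarrow> nat" where
  "sep_order A B = card (A \<inter> B)"

definition nontrivial_sep :: "'a set \<Rightarrow> 'a set \<Rightarrow> 'a set \<Rightarrow> bool" where
  "nontrivial_sep V A B \<longleftrightarrow> A \<noteq> V \<and> B \<noteq> V"

definition induced_edge_count :: "'a set set \<Rightarrow> 'a set \<Rightarrow> nat" where
  "induced_edge_count E A = card {e \<in> E. e \<subseteq> A}"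

definition weakly_4_connected :: "'a set \<Rightarrow> 'a set set \<Rightarrow> bool" where
  "weakly_4_connected V E \<longleftrightarrow> k_connected 3 V E \<and> card V \<ge> 5 \<and>
     (\<forall>A B. separation V E A B \<and> sep_order A B \<le> 3 \<longrightarrow>
        induced_edge_count E A \<le> 4 \<or> induced_edge_count E B \<le> 4)"

(* H contains a minor isomorphic to G, expressed by a minor model (branch sets):
   disjoint nonempty connected vertex sets of H, one per vertex of G,
   with an H-edge between the branch sets of every edge of G. *)
definition has_minor :: "'b set \<Rightarrow> 'b set set \<Rightarrow> 'a set \<Rightarrow> 'a set set \<Rightarrow> bool" where
  "has_minor VH EH VG EG \<longleftrightarrow> (\<exists>\<beta> :: 'a \<Rightarrow> 'b set.
     (\<forall>v\<in>VG. \<beta> v \<subseteq> VH \<and> connected_in EH (\<beta> v)) \<and>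
     (\<forall>u\<in>VG. \<forall>v\<in>VG. u \<noteq> v \<longrightarrow> \<beta> u \<inter> \<beta> v = {}) \<and>
     (\<forall>u v. {u, v} \<in> EG \<longrightarrow> (\<exists>x\<in>\<beta> u. \<exists>y\<in>\<beta> v. {x, y} \<in> EH)))"

definition neighbours :: "'a set set \<Rightarrow> 'a \<Rightarrow> 'a set" where
  "neighbours E v = {u. {v, u} \<in> E}"

(* Old vertices x become (x, False); v is replaced by v1 = (v, False) adjacent to N1
   and v2 = (v, True) adjacent to N2, and v1 v2 are adjacent. *)
definition split_V :: "'a set \<Rightarrow> 'a \<Rightarrow> ('a \<times> bool) set" where
  "split_V V v = (\<lambda>x. (x, False)) ` (V - {v}) \<union> {(v, False), (v, True)}"

definition split_E :: "'a set set \<Rightarrow> 'a \<Rightarrow> 'a set \<Rightarrow> 'a set \<Rightarrow> ('a \<times> bool) set set" where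
  "split_E E v N1 N2 =
     {{(a, False), (b, False)} | a b. {a, b} \<in> E \<and> a \<noteq> v \<and> b \<noteq> v}
     \<union> {{(v, False), (v, True)}}
     \<union> {{(v, False), (n, False)} | n. n \<in> N1}
     \<union> {{(v, True), (n, False)} | n. n \<in> N2}"

definition valid_split :: "'a set set \<Rightarrow> 'a \<Rightarrow> 'a set \<Rightarrow> 'a set \<Rightarrow> bool" where
  "valid_split E v N1 N2 \<longleftrightarrow> N1 \<union> N2 = neighbours E v \<and> N1 \<inter> N2 = {} \<and>
     card N1 \<ge> 2 \<and> card N2 \<ge> 2"

end

theory Submission
  imports Defs
begin

text \<open>
  Fix a minor model of \<open>G\<^sub>1\<close> in \<open>H\<close> whose branch sets of \<open>Q\<close> cover as few vertices as
  possible and, subject to this, whose branch sets of \<open>P\<close> cover as many as possible. If a branch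
  set of \<open>P\<close> touches one of \<open>R\<close>, the model already realises the new edge. If the branch set of
  some \<open>q\<close> contains distinct vertices \<open>a\<^sub>1, a\<^sub>2\<close> adjacent to the branch sets of \<open>p\<^sub>1, p\<^sub>2\<close>, cut it
  into connected parts \<open>X \<ni> a\<^sub>1\<close> and \<open>Y \<ni> a\<^sub>2\<close>: by optimality neither part can be handed over to
  \<open>p\<^sub>1\<close> resp. \<open>p\<^sub>2\<close>, so each part is needed by some further neighbour of \<open>q\<close>, and the cut is a split of \<open>q\<close>.
  Otherwise every branch set of \<open>Q\<close> has at most one vertex with a neighbour in the branch sets
  of \<open>P\<close>, and by optimality every other neighbour of these lies in them. So at most three
  vertices separate the two branch sets of \<open>P\<close> from the two of \<open>R\<close>, which is impossible in a
  weakly 4-connected graph: minimum degree three puts at least five edges on each side.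
\<close>

section \<open>Connected vertex sets\<close>

definition induced_adj :: "'a set set \<Rightarrow> 'a set \<Rightarrow> ('a \<times> 'a) set" where
  "induced_adj E S = {(x, y). {x, y} \<in> E \<and> x \<in> S \<and> y \<in> S}"

definition adj :: "'a set set \<Rightarrow> 'a set \<Rightarrow> 'a set \<Rightarrow> bool" where
  "adj E X Y \<longleftrightarrow> (\<exists>x\<in>X. \<exists>y\<in>Y. {x, y} \<in> E)"

lemma adj_sym: "adj E X Y \<longleftrightarrow> adj E Y X"
  unfolding adj_def by (metis insert_commute)

lemma adj_mono: "adj E X Y \<Longrightarrow> X \<subseteq> X' \<Longrightarrow> Y \<subseteq> Y' \<Longrightarrow> adj E X' Y'"
  by (auto simp: adj_def)

lemma adj_Un_left: "adj E (X \<union> Y) Z \<longleftrightarrow> adj E X Z \<or> adj E Y Z"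
  by (auto simp: adj_def)

lemma adj_Un_right: "adj E Z (X \<union> Y) \<longleftrightarrow> adj E Z X \<or> adj E Z Y"
  by (auto simp: adj_def)

lemma adj_singleton_witness: "adj E X Y \<Longrightarrow> \<exists>x\<in>X. adj E {x} Y"
  by (auto simp: adj_def)

lemma connected_in_iff:
  "connected_in E S \<longleftrightarrow> S \<noteq> {} \<and> (\<forall>u\<in>S. \<forall>v\<in>S. (u, v) \<in> (induced_adj E S)\<^sup>*)"
  by (simp add: connected_in_def induced_adj_def)

lemma induced_adj_mono: "S \<subseteq> T \<Longrightarrow> induced_adj E S \<subseteq> induced_adj E T"
  by (auto simp: induced_adj_def)

lemma induced_adj_rtrancl_sym:
  assumes "(u, v) \<in> (induced_adj E S)\<^sup>*"
  shows "(v, u) \<in> (induced_adj E S)\<^sup>*"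
proof -
  have "sym (induced_adj E S)"
    by (auto simp: sym_def induced_adj_def insert_commute)
  with assms show ?thesis
    using sym_rtrancl unfolding sym_def by blast
qed

lemma connected_inI_root:
  assumes "x \<in> S" and "\<And>v. v \<in> S \<Longrightarrow> (x, v) \<in> (induced_adj E S)\<^sup>*"
  shows "connected_in E S"
  unfolding connected_in_iff
  using assms induced_adj_rtrancl_sym rtrancl_trans by (metis empty_iff)

lemma connected_in_singleton: "connected_in E {v}"
  by (simp add: connected_in_def)

lemma connected_in_Un:
  assumes S: "connected_in E S" and T: "connected_in E T" and ST: "adj E S T"
  shows "connected_in E (S \<union> T)"
proof -
  let ?r = "induced_adj E (S \<union> T)"
  obtain x y where xy: "x \<in> S" "y \<in> T" "{x, y} \<in> E"
    using ST by (auto simp: adj_def)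
  have in_S: "(u, v) \<in> ?r\<^sup>*" if "u \<in> S" "v \<in> S" for u v
    using S that rtrancl_mono[OF induced_adj_mono[of S "S \<union> T" E]]
    by (auto simp: connected_in_iff)
  have in_T: "(u, v) \<in> ?r\<^sup>*" if "u \<in> T" "v \<in> T" for u v
    using T that rtrancl_mono[OF induced_adj_mono[of T "S \<union> T" E]]
    by (auto simp: connected_in_iff)
  have "(x, y) \<in> ?r"
    using xy by (auto simp: induced_adj_def)
  then have "(x, v) \<in> ?r\<^sup>*" if "v \<in> T" for v
    using in_T[OF xy(2) that] by (rule converse_rtrancl_into_rtrancl)
  then show ?thesis
    using xy(1) in_S[OF xy(1)] by (intro connected_inI_root[of x]) auto
qed

lemma connected_in_parts_adj:
  assumes conn: "connected_in E (X \<union> Y)" and disj: "X \<inter> Y = {}"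
    and "X \<noteq> {}" "Y \<noteq> {}"
  shows "adj E X Y"
proof -
  obtain x y where x: "x \<in> X" and y: "y \<in> Y"
    using assms by blast
  have leave_X: "z \<in> X \<or> adj E X Y" if "(x, z) \<in> (induced_adj E (X \<union> Y))\<^sup>*" for z
    using that
  proof (induction rule: rtrancl_induct)
    case base
    show ?case using x by simp
  next
    case (step z w)
    then show ?case by (auto simp: induced_adj_def adj_def)
  qed
  have "(x, y) \<in> (induced_adj E (X \<union> Y))\<^sup>*"
    using conn x y by (auto simp: connected_in_iff)
  then show ?thesis
    using leave_X y disj by blast
qed

lemma connected_in_split:
  assumes S: "connected_in E S" and a: "a \<in> S" and b: "b \<in> S" and ab: "a \<noteq> b"
  obtains X Y where "S = X \<union> Y" "X \<inter> Y = {}" "a \<in> X" "b \<in> Y"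
    "connected_in E X" "connected_in E Y"
proof -
  \<comment> \<open>\<open>Y\<close> is the component of \<open>b\<close> in \<open>S - {a}\<close>; its complement stays connected through \<open>a\<close>.\<close>
  define C where "C = {v. (b, v) \<in> (induced_adj E (S - {a}))\<^sup>*}"
  have C_sub: "C \<subseteq> S - {a}"
  proof
    fix v
    assume "v \<in> C"
    then have "(b, v) \<in> (induced_adj E (S - {a}))\<^sup>*"
      by (simp add: C_def)
    then show "v \<in> S - {a}"
      by (induction rule: rtrancl_induct) (use b ab in \<open>auto simp: induced_adj_def\<close>)
  qed
  have "(b, v) \<in> (induced_adj E C)\<^sup>*" if "(b, v) \<in> (induced_adj E (S - {a}))\<^sup>*" for v
    using that
  proof (induction rule: rtrancl_induct)
    case base
    show ?case by simp
  next
    case (step y z)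
    have "y \<in> C" "z \<in> C"
      using step.hyps by (auto simp: C_def intro: rtrancl_into_rtrancl)
    with step.hyps(2) have "(y, z) \<in> induced_adj E C"
      by (simp add: induced_adj_def)
    with step.IH show ?case
      by (rule rtrancl_into_rtrancl)
  qed
  then have conn_C: "connected_in E C"
    by (intro connected_inI_root[of b]) (auto simp: C_def)
  have "(v, a) \<in> (induced_adj E (S - C))\<^sup>*"
    if "(v, a) \<in> (induced_adj E S)\<^sup>*" "v \<in> S - C" for v
    using that
  proof (induction rule: converse_rtrancl_induct)
    case base
    show ?case by simp
  next
    case (step v w)
    show ?case
    proof (cases "v = a")
      case False
      from step.hyps(1) have w: "w \<in> S" and vw: "{v, w} \<in> E"
        by (auto simp: induced_adj_def)
      have "w \<notin> C"
      proof
        assume "w \<in> C"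
        moreover from this have "(w, v) \<in> induced_adj E (S - {a})"
          using C_sub False step.prems vw by (auto simp: induced_adj_def insert_commute)
        ultimately have "v \<in> C"
          by (auto simp: C_def)
        with step.prems show False by simp
      qed
      with step.prems w vw have "(v, w) \<in> induced_adj E (S - C)"
        by (simp add: induced_adj_def)
      with step.IH w \<open>w \<notin> C\<close> show ?thesis
        by (meson DiffI converse_rtrancl_into_rtrancl)
    qed simp
  qed
  moreover have "(v, a) \<in> (induced_adj E S)\<^sup>*" if "v \<in> S" for v
    using S that a by (auto simp: connected_in_iff)
  ultimately have "connected_in E (S - C)"
    using a C_sub by (intro connected_inI_root[of a]) (auto intro: induced_adj_rtrancl_sym)
  moreover have "b \<in> C"
    by (simp add: C_def)
  ultimately show ?thesis
    using that[of "S - C" C] conn_C C_sub a by blast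
qed

section \<open>Weakly 4-connected graphs\<close>

lemma simple_graph_edgeD:
  assumes "simple_graph V E" "{u, v} \<in> E"
  shows "u \<noteq> v" "u \<in> V" "v \<in> V"
  using assms unfolding simple_graph_def by (auto simp: doubleton_eq_iff)

lemma simple_graph_finite_edges:
  assumes "simple_graph V E"
  shows "finite E"
proof (rule finite_subset)
  show "E \<subseteq> Pow V"
    using simple_graph_edgeD(2,3)[OF assms] assms unfolding simple_graph_def by fastforce
  show "finite (Pow V)"
    using assms by (simp add: simple_graph_def)
qed

lemma neighbours_subset:
  assumes "simple_graph V E"
  shows "neighbours E v \<subseteq> V"
  using simple_graph_edgeD[OF assms] by (auto simp: neighbours_def)

lemma finite_neighbours:
  assumes "simple_graph V E"
  shows "finite (neighbours E v)"
  using finite_subset[OF neighbours_subset[OF assms]] assms by (simp add: simple_graph_def)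

lemma weakly_4_connected_degree_ge_3:
  assumes sg: "simple_graph V E" and w: "weakly_4_connected V E" and v: "v \<in> V"
  shows "3 \<le> card (neighbours E v)"
proof (rule ccontr)
  let ?N = "neighbours E v"
  assume "\<not> 3 \<le> card ?N"
  then have small: "card ?N < 3" by simp
  then have conn: "connected_in E (V - ?N)"
    using w neighbours_subset[OF sg] unfolding weakly_4_connected_def k_connected_def by blast
  have v_N: "v \<notin> ?N"
    using simple_graph_edgeD(1)[OF sg, of v v] by (auto simp: neighbours_def)
  have "card (insert v ?N) < card V"
    using small w v_N finite_neighbours[OF sg] by (simp add: weakly_4_connected_def)
  then have "\<not> V \<subseteq> insert v ?N"
    using card_mono[OF finite_insert[THEN iffD2, OF finite_neighbours[OF sg]]] by (meson not_le)
  then obtain w where w: "w \<in> V - ?N" "w \<noteq> v"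
    by blast
  then have "(v, w) \<in> (induced_adj E (V - ?N))\<^sup>*"
    using conn v v_N by (auto simp: connected_in_iff)
  then obtain u where "(v, u) \<in> induced_adj E (V - ?N)"
    using w(2) by (cases rule: converse_rtranclE) auto
  then show False
    by (auto simp: induced_adj_def neighbours_def)
qed

lemma induced_edge_count_ge_5:
  assumes fin: "finite E" and xy: "x \<noteq> y" "x \<in> A" "y \<in> A"
    and nbrs: "neighbours E x \<subseteq> A" "neighbours E y \<subseteq> A"
    and deg: "3 \<le> card (neighbours E x)" "3 \<le> card (neighbours E y)"
  shows "5 \<le> induced_edge_count E A"
proof -
  define Ix where "Ix = (\<lambda>u. {x, u}) ` neighbours E x"
  define Iy where "Iy = (\<lambda>u. {y, u}) ` neighbours E y"
  have "finite (neighbours E x)" "finite (neighbours E y)"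
    using deg by (auto intro: card_ge_0_finite)
  then have fin_I: "finite Ix" "finite Iy"
    by (auto simp: Ix_def Iy_def)
  have "card Ix = card (neighbours E x)" "card Iy = card (neighbours E y)"
    unfolding Ix_def Iy_def by (auto intro!: card_image simp: inj_on_def doubleton_eq_iff)
  moreover have "card (Ix \<inter> Iy) \<le> 1"
  proof -
    have "Ix \<inter> Iy \<subseteq> {{x, y}}"
      using xy(1) by (auto simp: Ix_def Iy_def doubleton_eq_iff)
    then show ?thesis
      using card_mono[of "{{x, y}}"] by fastforce
  qed
  moreover have "card (Ix \<union> Iy) \<le> induced_edge_count E A"
    unfolding induced_edge_count_def
    using nbrs xy fin by (intro card_mono) (auto simp: Ix_def Iy_def neighbours_def)
  ultimately show ?thesis
    using card_Un_Int[OF fin_I] deg by linarith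
qed

lemma separation_sym: "separation V E A B \<Longrightarrow> separation V E B A"
  unfolding separation_def by (metis Un_commute insert_commute)

lemma separation_neighbours_subset:
  assumes sg: "simple_graph V E" and sep: "separation V E A B" and z: "z \<in> A - B"
  shows "neighbours E z \<subseteq> A"
proof
  fix u
  assume "u \<in> neighbours E z"
  then have e: "{z, u} \<in> E"
    by (simp add: neighbours_def)
  then have "u \<in> V"
    using simple_graph_edgeD[OF sg] by blast
  with sep z e show "u \<in> A"
    unfolding separation_def by blast
qed

lemma weakly_4_connected_side_edges:
  assumes sg: "simple_graph V E" and w: "weakly_4_connected V E"
    and sep: "separation V E A B" and xy: "x \<in> A - B" "y \<in> A - B" "x \<noteq> y"
  shows "5 \<le> induced_edge_count E A"
proof -
  have "x \<in> V" "y \<in> V"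
    using sep xy by (auto simp: separation_def)
  then show ?thesis
    using xy separation_neighbours_subset[OF sg sep] weakly_4_connected_degree_ge_3[OF sg w]
    by (intro induced_edge_count_ge_5[OF simple_graph_finite_edges[OF sg]]) auto
qed

lemma weakly_4_connected_no_small_separation:
  assumes sg: "simple_graph V E" and w: "weakly_4_connected V E"
    and sep: "separation V E A B" and ord: "sep_order A B \<le> 3"
    and xy: "x \<in> A - B" "y \<in> A - B" "x \<noteq> y"
    and xy': "x' \<in> B - A" "y' \<in> B - A" "x' \<noteq> y'"
  shows False
proof -
  have "5 \<le> induced_edge_count E A" "5 \<le> induced_edge_count E B"
    using weakly_4_connected_side_edges[OF sg w sep xy]
      weakly_4_connected_side_edges[OF sg w separation_sym[OF sep] xy'] by auto
  moreover have "induced_edge_count E A \<le> 4 \<or> induced_edge_count E B \<le> 4"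
    using w sep ord unfolding weakly_4_connected_def by blast
  ultimately show False by linarith
qed

section \<open>Minor models\<close>

definition minor_model :: "'b set \<Rightarrow> 'b set set \<Rightarrow> 'a set \<Rightarrow> 'a set set \<Rightarrow> ('a \<Rightarrow> 'b set) \<Rightarrow> bool"
  where
  "minor_model VH EH VG EG \<beta> \<longleftrightarrow>
     (\<forall>v\<in>VG. \<beta> v \<subseteq> VH \<and> connected_in EH (\<beta> v)) \<and>
     (\<forall>u\<in>VG. \<forall>v\<in>VG. u \<noteq> v \<longrightarrow> \<beta> u \<inter> \<beta> v = {}) \<and>
     (\<forall>u v. {u, v} \<in> EG \<longrightarrow> adj EH (\<beta> u) (\<beta> v))"

lemma has_minor_iff_minor_model: "has_minor VH EH VG EG \<longleftrightarrow> (\<exists>\<beta>. minor_model VH EH VG EG \<beta>)"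
  unfolding has_minor_def minor_model_def adj_def by blast

lemma minor_modelI:
  assumes "\<And>v. v \<in> VG \<Longrightarrow> \<beta> v \<subseteq> VH"
    and "\<And>v. v \<in> VG \<Longrightarrow> connected_in EH (\<beta> v)"
    and "\<And>u v. u \<in> VG \<Longrightarrow> v \<in> VG \<Longrightarrow> u \<noteq> v \<Longrightarrow> \<beta> u \<inter> \<beta> v = {}"
    and "\<And>u v. {u, v} \<in> EG \<Longrightarrow> adj EH (\<beta> u) (\<beta> v)"
  shows "minor_model VH EH VG EG \<beta>"
  using assms unfolding minor_model_def by blast

context
  fixes VH :: "'b set" and EH :: "'b set set" and VG :: "'a set" and EG :: "'a set set"
    and \<beta> :: "'a \<Rightarrow> 'b set"
  assumes model: "minor_model VH EH VG EG \<beta>"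
begin

lemma minor_model_subset: "v \<in> VG \<Longrightarrow> \<beta> v \<subseteq> VH"
  using model unfolding minor_model_def by blast

lemma minor_model_connected: "v \<in> VG \<Longrightarrow> connected_in EH (\<beta> v)"
  using model unfolding minor_model_def by blast

lemma minor_model_nonempty: "v \<in> VG \<Longrightarrow> \<beta> v \<noteq> {}"
  using minor_model_connected unfolding connected_in_def by blast

lemma minor_model_disjoint: "u \<in> VG \<Longrightarrow> v \<in> VG \<Longrightarrow> u \<noteq> v \<Longrightarrow> \<beta> u \<inter> \<beta> v = {}"
  using model unfolding minor_model_def by blast

lemma minor_model_edge: "{u, v} \<in> EG \<Longrightarrow> adj EH (\<beta> u) (\<beta> v)"
  using model unfolding minor_model_def by blast

lemma minor_model_insert_edge:
  assumes "adj EH (\<beta> u) (\<beta> v)"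
  shows "minor_model VH EH VG (insert {u, v} EG) \<beta>"
proof (rule minor_modelI)
  fix x y
  assume "{x, y} \<in> insert {u, v} EG"
  then show "adj EH (\<beta> x) (\<beta> y)"
    using assms minor_model_edge adj_sym[of EH "\<beta> u" "\<beta> v"] by (auto simp: doubleton_eq_iff)
qed (use minor_model_subset minor_model_connected minor_model_disjoint in auto)

lemma minor_model_absorb:
  assumes s: "s \<in> VG" and v: "v \<in> VH" and free: "\<forall>u\<in>VG. v \<notin> \<beta> u"
    and vs: "adj EH {v} (\<beta> s)"
  shows "minor_model VH EH VG EG (\<beta>(s := insert v (\<beta> s)))"
proof (rule minor_modelI)
  fix w
  assume "w \<in> VG"
  then show "(\<beta>(s := insert v (\<beta> s))) w \<subseteq> VH"
    using v minor_model_subset s by auto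
  show "connected_in EH ((\<beta>(s := insert v (\<beta> s))) w)"
    using connected_in_Un[OF connected_in_singleton minor_model_connected[OF s] vs]
      minor_model_connected[OF \<open>w \<in> VG\<close>] by auto
next
  fix u w
  assume "u \<in> VG" "w \<in> VG" "u \<noteq> w"
  then show "(\<beta>(s := insert v (\<beta> s))) u \<inter> (\<beta>(s := insert v (\<beta> s))) w = {}"
    using minor_model_disjoint free by auto
next
  fix u w
  assume "{u, w} \<in> EG"
  then show "adj EH ((\<beta>(s := insert v (\<beta> s))) u) ((\<beta>(s := insert v (\<beta> s))) w)"
    by (rule minor_model_edge[THEN adj_mono]) auto
qed

lemma minor_model_transfer:
  assumes sg: "simple_graph VG EG" and p: "p \<in> VG" and q: "q \<in> VG" "p \<noteq> q"
    and part: "\<beta> q = X \<union> Y" "X \<inter> Y = {}"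
    and conn: "connected_in EH X" "connected_in EH Y"
    and pX: "adj EH (\<beta> p) X"
    and Y_nbrs: "\<And>u. {q, u} \<in> EG \<Longrightarrow> u \<noteq> p \<Longrightarrow> adj EH Y (\<beta> u)"
  shows "minor_model VH EH VG EG (\<beta>(p := \<beta> p \<union> X, q := Y))"
proof -
  let ?\<beta> = "\<beta>(p := \<beta> p \<union> X, q := Y)"
  have XY: "adj EH X Y"
    using connected_in_parts_adj[of EH X Y] minor_model_connected[OF q(1)] part conn
    by (auto simp: connected_in_def)
  have edge_not_q: "adj EH (?\<beta> u) (?\<beta> w)" if e: "{u, w} \<in> EG" and "w \<noteq> q" for u w
  proof (cases "u = q")
    case True
    show ?thesis
    proof (cases "w = p")
      case True
      with XY \<open>u = q\<close> q(2) show ?thesis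
        by (auto simp: adj_sym adj_Un_right)
    next
      case False
      with Y_nbrs e \<open>u = q\<close> \<open>w \<noteq> q\<close> show ?thesis by auto
    qed
  next
    case False
    with minor_model_edge[OF e] \<open>w \<noteq> q\<close> show ?thesis
      by (rule_tac adj_mono) auto
  qed
  show ?thesis
  proof (rule minor_modelI)
    fix w
    assume "w \<in> VG"
    then show "?\<beta> w \<subseteq> VH" "connected_in EH (?\<beta> w)"
      using minor_model_subset minor_model_connected p q part conn
        connected_in_Un[OF minor_model_connected[OF p] conn(1) pX] by auto
  next
    fix u w
    assume "u \<in> VG" "w \<in> VG" "u \<noteq> w"
    then show "?\<beta> u \<inter> ?\<beta> w = {}"
      using minor_model_disjoint[of u w] minor_model_disjoint[OF _ q(1)]
        minor_model_disjoint[OF p q] part by auto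
  next
    fix u w
    assume e: "{u, w} \<in> EG"
    show "adj EH (?\<beta> u) (?\<beta> w)"
    proof (cases "w = q")
      case True
      with e simple_graph_edgeD(1)[OF sg e] show ?thesis
        using edge_not_q[of w u] by (auto simp: insert_commute adj_sym)
    qed (use e edge_not_q in auto)
  qed
qed

lemma minor_model_split:
  assumes sg: "simple_graph VG EG" and q: "q \<in> VG"
    and part: "\<beta> q = X \<union> Y" "X \<inter> Y = {}"
    and conn: "connected_in EH X" "connected_in EH Y"
    and N: "N1 \<union> N2 = neighbours EG q"
    and X_att: "\<And>n. n \<in> N1 \<Longrightarrow> adj EH X (\<beta> n)"
    and Y_att: "\<And>n. n \<in> N2 \<Longrightarrow> adj EH Y (\<beta> n)"
  shows "minor_model VH EH (split_V VG q) (split_E EG q N1 N2)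
           (\<lambda>(v, b). if v = q then (if b then Y else X) else \<beta> v)"
    (is "minor_model _ _ _ _ ?\<beta>")
proof (rule minor_modelI)
  fix w
  assume "w \<in> split_V VG q"
  then consider (q) b where "w = (q, b)" | (old) v where "w = (v, False)" "v \<in> VG" "v \<noteq> q"
    by (auto simp: split_V_def)
  then have "?\<beta> w \<subseteq> VH \<and> connected_in EH (?\<beta> w)"
  proof cases
    case q
    then show ?thesis
      using minor_model_subset[OF \<open>q \<in> VG\<close>] part conn by auto
  next
    case old
    then show ?thesis
      using minor_model_subset minor_model_connected by auto
  qed
  then show "?\<beta> w \<subseteq> VH" "connected_in EH (?\<beta> w)"
    by auto
next
  fix u w
  assume "u \<in> split_V VG q" "w \<in> split_V VG q" "u \<noteq> w"
  then show "?\<beta> u \<inter> ?\<beta> w = {}"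
    using minor_model_disjoint minor_model_disjoint[OF _ q] part
    by (auto simp: split_V_def) blast+
next
  have XY: "adj EH X Y"
    using connected_in_parts_adj[of EH X Y] minor_model_connected[OF q] part conn
    by (auto simp: connected_in_def)
  have nbr: "n \<noteq> q" if "n \<in> N1 \<union> N2" for n
    using that N simple_graph_edgeD(1)[OF sg] by (auto simp: neighbours_def)
  fix u w
  assume "{u, w} \<in> split_E EG q N1 N2"
  then consider
      (old) a b where "{u, w} = {(a, False), (b, False)}" "{a, b} \<in> EG" "a \<noteq> q" "b \<noteq> q"
    | (new) "{u, w} = {(q, False), (q, True)}"
    | (N1) n where "{u, w} = {(q, False), (n, False)}" "n \<in> N1"
    | (N2) n where "{u, w} = {(q, True), (n, False)}" "n \<in> N2"
    unfolding split_E_def by blast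
  then have "adj EH (?\<beta> u) (?\<beta> w) \<or> adj EH (?\<beta> w) (?\<beta> u)"
  proof cases
    case old
    then show ?thesis using minor_model_edge[OF old(2)] by (auto simp: doubleton_eq_iff)
  next
    case new
    then show ?thesis using XY by (auto simp: doubleton_eq_iff)
  next
    case N1
    then show ?thesis using X_att nbr by (auto simp: doubleton_eq_iff)
  next
    case N2
    then show ?thesis using Y_att nbr by (auto simp: doubleton_eq_iff)
  qed
  then show "adj EH (?\<beta> u) (?\<beta> w)"
    using adj_sym by blast
qed

lemma has_minor_split_at_attachments:
  assumes sg: "simple_graph VG EG" and q: "q \<in> VG"
    and part: "\<beta> q = X \<union> Y" "X \<inter> Y = {}"
    and conn: "connected_in EH X" "connected_in EH Y"
    and p: "p1 \<in> neighbours EG q" "p2 \<in> neighbours EG q" "p1 \<noteq> p2"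
    and att: "adj EH X (\<beta> p1)" "adj EH Y (\<beta> p2)"
    and n1: "n1 \<in> neighbours EG q - {p1, p2}" "\<not> adj EH Y (\<beta> n1)"
    and n2: "n2 \<in> neighbours EG q - {p1, p2}" "\<not> adj EH X (\<beta> n2)"
  shows "\<exists>N1 N2. valid_split EG q N1 N2 \<and> p1 \<in> N1 \<and> p2 \<in> N2 \<and>
           has_minor VH EH (split_V VG q) (split_E EG q N1 N2)"
proof -
  let ?N = "neighbours EG q"
  define N1 where "N1 = insert p1 {n \<in> ?N - {p1, p2}. adj EH X (\<beta> n)}"
  define N2 where "N2 = ?N - N1"
  have nbr_att: "adj EH X (\<beta> n) \<or> adj EH Y (\<beta> n)" if "n \<in> ?N" for n
    using that minor_model_edge[of q n] part by (auto simp: neighbours_def adj_Un_left)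
  have fin: "finite N1" "finite N2"
    using finite_neighbours[OF sg] p by (auto simp: N1_def N2_def)
  have "{p1, n1} \<subseteq> N1" "{p2, n2} \<subseteq> N2"
    using p n1 n2 nbr_att by (auto simp: N1_def N2_def)
  then have "2 \<le> card N1" "2 \<le> card N2"
    using n1 n2 fin by (metis Diff_iff card_2_iff card_mono insertCI)+
  moreover have "N1 \<union> N2 = ?N" "N1 \<inter> N2 = {}"
    using p by (auto simp: N1_def N2_def)
  moreover have "minor_model VH EH (split_V VG q) (split_E EG q N1 N2)
           (\<lambda>(v, b). if v = q then (if b then Y else X) else \<beta> v)"
    using p att nbr_att
    by (intro minor_model_split[OF sg q part conn]) (auto simp: N1_def N2_def)
  moreover have "p1 \<in> N1" "p2 \<in> N2"
    using p by (auto simp: N1_def N2_def)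
  ultimately show ?thesis
    unfolding has_minor_iff_minor_model valid_split_def by blast
qed

end

lemma minor_model_no_small_separation:
  assumes H: "simple_graph VH EH" and w4c: "weakly_4_connected VH EH"
    and model: "minor_model VH EH VG EG \<beta>"
    and sep: "separation VH EH A B" and ord: "sep_order A B \<le> 3"
    and U: "U \<subseteq> VG" "2 \<le> card U" "\<Union>(\<beta> ` U) \<subseteq> A - B"
    and W: "W \<subseteq> VG" "2 \<le> card W" "\<Union>(\<beta> ` W) \<subseteq> B - A"
  shows False
proof -
  have two: "\<exists>u1\<in>S. \<exists>u2\<in>S. u1 \<noteq> u2" if "2 \<le> card S" for S
    using that card_le_Suc0_iff_eq[of S] by (cases "finite S") auto
  obtain u1 u2 w1 w2 where u: "u1 \<in> U" "u2 \<in> U" "u1 \<noteq> u2" and w: "w1 \<in> W" "w2 \<in> W" "w1 \<noteq> w2"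
    using two[OF U(2)] two[OF W(2)] by blast
  obtain x y x' y' where "x \<in> \<beta> u1" "y \<in> \<beta> u2" "x' \<in> \<beta> w1" "y' \<in> \<beta> w2"
    using minor_model_nonempty[OF model] u w U(1) W(1) by (metis all_not_in_conv subsetD)
  moreover have "\<beta> u1 \<inter> \<beta> u2 = {}" "\<beta> w1 \<inter> \<beta> w2 = {}"
    using minor_model_disjoint[OF model] u w U(1) W(1) by auto
  ultimately show False
    using weakly_4_connected_no_small_separation[OF H w4c sep ord, of x y x' y'] u w U(3) W(3)
    by blast
qed

section \<open>Optimal minor models\<close>

definition attachments :: "'a set set \<Rightarrow> 'a set \<Rightarrow> 'a set \<Rightarrow> 'a set" where
  "attachments E A B = {b \<in> B. adj E {b} A}"

lemma card_attachments_le_1: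
  assumes fin: "finite B" and adj: "adj E B A1" "adj E B A2"
    and unique: "\<And>a1 a2. a1 \<in> B \<Longrightarrow> a2 \<in> B \<Longrightarrow> adj E {a1} A1 \<Longrightarrow> adj E {a2} A2 \<Longrightarrow> a1 = a2"
  shows "card (attachments E (A1 \<union> A2) B) \<le> 1"
proof -
  obtain c e where c: "c \<in> B" "adj E {c} A1" and e: "e \<in> B" "adj E {e} A2"
    using adj_singleton_witness[OF adj(1)] adj_singleton_witness[OF adj(2)] by blast
  have "a = b" if "a \<in> attachments E (A1 \<union> A2) B" "b \<in> attachments E (A1 \<union> A2) B" for a b
  proof -
    have "a \<in> B" "b \<in> B" "adj E {a} A1 \<or> adj E {a} A2" "adj E {b} A1 \<or> adj E {b} A2"
      using that unfolding attachments_def adj_Un_right by auto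
    then show "a = b"
      using unique[OF _ e(1) _ e(2)] unique[OF c(1) _ c(2)] unique by metis
  qed
  moreover have "finite (attachments E (A1 \<union> A2) B)"
    using fin by (simp add: attachments_def)
  ultimately show ?thesis
    using card_le_Suc0_iff_eq[of "attachments E (A1 \<union> A2) B"] by (simp add: One_nat_def)
qed

lemma card_attachments_UN_le:
  assumes "finite I" and "\<And>i. i \<in> I \<Longrightarrow> card (attachments E A (B i)) \<le> 1"
  shows "card (attachments E A (\<Union>(B ` I))) \<le> card I"
proof -
  have "attachments E A (\<Union>(B ` I)) = (\<Union>i\<in>I. attachments E A (B i))"
    by (auto simp: attachments_def)
  then have "card (attachments E A (\<Union>(B ` I))) \<le> (\<Sum>i\<in>I. card (attachments E A (B i)))"
    using card_UN_le[OF assms(1)] by simp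
  also have "\<dots> \<le> card I"
    using sum_bounded_above[of I "\<lambda>i. card (attachments E A (B i))" 1] assms(2) by simp
  finally show ?thesis .
qed

definition optimal_model ::
    "'b set \<Rightarrow> 'b set set \<Rightarrow> 'a set \<Rightarrow> 'a set set \<Rightarrow> 'a set \<Rightarrow> 'a set \<Rightarrow> ('a \<Rightarrow> 'b set) \<Rightarrow> bool"
  where
  "optimal_model VH EH VG EG P Q \<beta> \<longleftrightarrow> minor_model VH EH VG EG \<beta> \<and>
     (\<forall>\<beta>'. minor_model VH EH VG EG \<beta>' \<longrightarrow>
        card (\<Union>(\<beta> ` Q)) < card (\<Union>(\<beta>' ` Q)) \<or>
        card (\<Union>(\<beta> ` Q)) = card (\<Union>(\<beta>' ` Q)) \<and> card (\<Union>(\<beta>' ` P)) \<le> card (\<Union>(\<beta> ` P)))"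

lemma optimal_model_exists:
  fixes P Q :: "'a set" and \<beta>\<^sub>0 :: "'a \<Rightarrow> 'b set"
  assumes fin: "finite VH" and P: "P \<subseteq> VG" and model: "minor_model VH EH VG EG \<beta>\<^sub>0"
  obtains \<beta> where "optimal_model VH EH VG EG P Q \<beta>"
proof -
  define N where "N = card VH"
  \<comment> \<open>Since the \<open>P\<close>-part is at most \<open>N\<close>, minimising \<open>\<mu>\<close> realises the lexicographic order.\<close>
  define \<mu> where "\<mu> \<beta> = (N + 1) * card (\<Union>(\<beta> ` Q)) + (N - card (\<Union>(\<beta> ` P)))"
    for \<beta> :: "'a \<Rightarrow> 'b set"
  obtain \<beta> where \<beta>: "minor_model VH EH VG EG \<beta>"
    and least: "\<And>\<beta>'. minor_model VH EH VG EG \<beta>' \<Longrightarrow> \<mu> \<beta> \<le> \<mu> \<beta>'"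
    using ex_has_least_nat[of "minor_model VH EH VG EG" \<beta>\<^sub>0 \<mu>] model by blast
  have P_le: "card (\<Union>(\<beta>' ` P)) \<le> N" if "minor_model VH EH VG EG \<beta>'" for \<beta>'
    unfolding N_def using P minor_model_subset[OF that] by (intro card_mono[OF fin]) auto
  have "card (\<Union>(\<beta> ` Q)) < card (\<Union>(\<beta>' ` Q)) \<or>
      card (\<Union>(\<beta> ` Q)) = card (\<Union>(\<beta>' ` Q)) \<and> card (\<Union>(\<beta>' ` P)) \<le> card (\<Union>(\<beta> ` P))"
    if \<beta>': "minor_model VH EH VG EG \<beta>'" for \<beta>'
  proof -
    have "\<not> card (\<Union>(\<beta>' ` Q)) < card (\<Union>(\<beta> ` Q))"
    proof
      assume "card (\<Union>(\<beta>' ` Q)) < card (\<Union>(\<beta> ` Q))"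
      then have "(N + 1) * (card (\<Union>(\<beta>' ` Q)) + 1) \<le> (N + 1) * card (\<Union>(\<beta> ` Q))"
        by (intro mult_le_mono2) simp
      with least[OF \<beta>'] show False
        unfolding \<mu>_def by simp
    qed
    then consider "card (\<Union>(\<beta> ` Q)) < card (\<Union>(\<beta>' ` Q))"
      | (eq) "card (\<Union>(\<beta> ` Q)) = card (\<Union>(\<beta>' ` Q))"
      by linarith
    then show ?thesis
    proof cases
      case eq
      then have "N - card (\<Union>(\<beta> ` P)) \<le> N - card (\<Union>(\<beta>' ` P))"
        using least[OF \<beta>'] unfolding \<mu>_def by simp
      with eq P_le[OF \<beta>] P_le[OF \<beta>'] show ?thesis
        by linarith
    qed simp
  qed
  with \<beta> show ?thesis
    using that unfolding optimal_model_def by blast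
qed

context
  fixes VH :: "'b set" and EH :: "'b set set" and VG :: "'a set" and EG :: "'a set set"
    and P Q :: "'a set" and \<beta> :: "'a \<Rightarrow> 'b set"
  assumes opt: "optimal_model VH EH VG EG P Q \<beta>" and fin: "finite VH"
    and PQ: "P \<inter> Q = {}" "P \<subseteq> VG" "Q \<subseteq> VG"
begin

lemma optimal_model_minor_model: "minor_model VH EH VG EG \<beta>"
  using opt by (simp add: optimal_model_def)

lemma optimal_modelD:
  assumes "minor_model VH EH VG EG \<beta>'"
  shows "card (\<Union>(\<beta> ` Q)) < card (\<Union>(\<beta>' ` Q)) \<or>
    card (\<Union>(\<beta> ` Q)) = card (\<Union>(\<beta>' ` Q)) \<and> card (\<Union>(\<beta>' ` P)) \<le> card (\<Union>(\<beta> ` P))"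
  using opt assms unfolding optimal_model_def by blast

lemma optimal_model_no_free_neighbour:
  assumes p: "p \<in> P" and v: "v \<in> VH" "\<forall>u\<in>VG. v \<notin> \<beta> u" and vp: "adj EH {v} (\<beta> p)"
  shows False
proof -
  let ?\<beta> = "\<beta>(p := insert v (\<beta> p))"
  have model: "minor_model VH EH VG EG ?\<beta>"
    using minor_model_absorb[OF optimal_model_minor_model] p PQ(2) v vp by blast
  have "p \<notin> Q"
    using p PQ(1) by blast
  then have "?\<beta> ` Q = \<beta> ` Q"
    by (intro image_cong) auto
  then have Q_same: "\<Union>(?\<beta> ` Q) = \<Union>(\<beta> ` Q)"
    by simp
  have "v \<notin> \<Union>(\<beta> ` P)" "v \<in> \<Union>(?\<beta> ` P)" "\<Union>(\<beta> ` P) \<subseteq> \<Union>(?\<beta> ` P)"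
    using p PQ(2) v(2) by auto
  then have "\<Union>(\<beta> ` P) \<subset> \<Union>(?\<beta> ` P)"
    by blast
  moreover have "\<Union>(?\<beta> ` P) \<subseteq> VH"
    using PQ(2) minor_model_subset[OF model] by blast
  ultimately have "card (\<Union>(\<beta> ` P)) < card (\<Union>(?\<beta> ` P))"
    using fin by (meson finite_subset psubset_card_mono)
  with optimal_modelD[OF model] show False
    unfolding Q_same by linarith
qed

lemma optimal_model_no_transfer:
  assumes p: "p \<in> P" and q: "q \<in> Q" and part: "\<beta> q = X \<union> Y" "X \<inter> Y = {}" "X \<noteq> {}"
    and model: "minor_model VH EH VG EG (\<beta>(p := \<beta> p \<union> X, q := Y))"
  shows False
proof -
  let ?\<beta> = "\<beta>(p := \<beta> p \<union> X, q := Y)"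
  have "p \<notin> Q"
    using p PQ(1) by blast
  have X_gone: "X \<inter> ?\<beta> q' = {}" if "q' \<in> Q" for q'
  proof (cases "q' = q")
    case False
    then have "\<beta> q \<inter> \<beta> q' = {}"
      using minor_model_disjoint[OF optimal_model_minor_model] q that PQ(3) by blast
    with False \<open>p \<notin> Q\<close> that part(1) show ?thesis
      by auto
  qed (use part(2) in auto)
  have "\<Union>(?\<beta> ` Q) \<subseteq> \<Union>(\<beta> ` Q)"
    using \<open>p \<notin> Q\<close> part(1) by auto
  moreover obtain x where "x \<in> X"
    using part(3) by blast
  then have "x \<in> \<Union>(\<beta> ` Q) - \<Union>(?\<beta> ` Q)"
    using q part(1) X_gone by blast
  ultimately have "\<Union>(?\<beta> ` Q) \<subset> \<Union>(\<beta> ` Q)"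
    by blast
  moreover have "finite (\<Union>(\<beta> ` Q))"
    using PQ(3) minor_model_subset[OF optimal_model_minor_model] by (intro finite_subset[OF _ fin]) auto
  ultimately have "card (\<Union>(?\<beta> ` Q)) < card (\<Union>(\<beta> ` Q))"
    by (rule psubset_card_mono[rotated])
  with optimal_modelD[OF model] show False
    by linarith
qed

lemma optimal_model_split_attachments:
  assumes sg: "simple_graph VG EG"
    and P: "P = {p1, p2}" "p1 \<noteq> p2" and q: "q \<in> Q"
    and edges: "{q, p1} \<in> EG" "{q, p2} \<in> EG"
    and att: "a1 \<in> \<beta> q" "a2 \<in> \<beta> q" "a1 \<noteq> a2" "adj EH {a1} (\<beta> p1)" "adj EH {a2} (\<beta> p2)"
  shows "\<exists>N1 N2. valid_split EG q N1 N2 \<and> p1 \<in> N1 \<and> p2 \<in> N2 \<and>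
           has_minor VH EH (split_V VG q) (split_E EG q N1 N2)"
proof -
  note model = optimal_model_minor_model
  let ?N = "neighbours EG q"
  have V: "q \<in> VG" "p1 \<in> VG" "p2 \<in> VG" "p1 \<noteq> q" "p2 \<noteq> q"
    using q PQ P by auto
  obtain X Y where part: "\<beta> q = X \<union> Y" "X \<inter> Y = {}" and a: "a1 \<in> X" "a2 \<in> Y"
    and conn: "connected_in EH X" "connected_in EH Y"
    using connected_in_split[OF minor_model_connected[OF model V(1)] att(1-3)] by blast
  have XY_att: "adj EH X (\<beta> p1)" "adj EH Y (\<beta> p2)"
    using att(4,5) a by (auto intro: adj_mono)
  have "\<exists>n1\<in>?N - {p1, p2}. \<not> adj EH Y (\<beta> n1)"
  proof (rule ccontr)
    assume "\<not> ?thesis"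
    then have "minor_model VH EH VG EG (\<beta>(p1 := \<beta> p1 \<union> X, q := Y))"
      using XY_att V part conn
      by (intro minor_model_transfer[OF model sg]) (auto simp: neighbours_def adj_sym)
    then show False
      using optimal_model_no_transfer[OF _ q part] P a by blast
  qed
  moreover have "\<exists>n2\<in>?N - {p1, p2}. \<not> adj EH X (\<beta> n2)"
  proof (rule ccontr)
    assume "\<not> ?thesis"
    then have "minor_model VH EH VG EG (\<beta>(p2 := \<beta> p2 \<union> Y, q := X))"
      using XY_att V part conn
      by (intro minor_model_transfer[OF model sg]) (auto simp: neighbours_def adj_sym)
    then show False
      using optimal_model_no_transfer[OF _ q, of p2 Y X] part P a by blast
  qed
  moreover have "p1 \<in> ?N" "p2 \<in> ?N"
    using edges by (auto simp: neighbours_def)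
  ultimately show ?thesis
    using has_minor_split_at_attachments[OF model sg V(1) part conn _ _ P(2) XY_att] by blast
qed

lemma optimal_model_separation:
  assumes no_adj: "\<And>p r. p \<in> P \<Longrightarrow> r \<in> VG - (P \<union> Q) \<Longrightarrow> \<not> adj EH (\<beta> p) (\<beta> r)"
  shows "separation VH EH (\<Union>(\<beta> ` P) \<union> attachments EH (\<Union>(\<beta> ` P)) (\<Union>(\<beta> ` Q)))
    (VH - \<Union>(\<beta> ` P))"
proof -
  note model = optimal_model_minor_model
  have sub: "\<Union>(\<beta> ` P) \<subseteq> VH" "\<Union>(\<beta> ` Q) \<subseteq> VH"
    using PQ minor_model_subset[OF model] by blast+
  have closed: "v \<in> \<Union>(\<beta> ` P) \<or> v \<in> attachments EH (\<Union>(\<beta> ` P)) (\<Union>(\<beta> ` Q))"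
    if u: "u \<in> \<Union>(\<beta> ` P)" and v: "v \<in> VH" and e: "{u, v} \<in> EH" for u v
  proof -
    obtain p where p: "p \<in> P" "u \<in> \<beta> p"
      using u by blast
    then have vp: "adj EH {v} (\<beta> p)"
      using e unfolding adj_def by (metis insert_commute singletonI)
    show ?thesis
    proof (cases "\<exists>w\<in>VG. v \<in> \<beta> w")
      case False
      then show ?thesis
        using optimal_model_no_free_neighbour[OF p(1) v _ vp] by blast
    next
      case True
      then obtain w where w: "w \<in> VG" "v \<in> \<beta> w"
        by blast
      have "adj EH (\<beta> w) (\<beta> p)"
        using adj_mono[OF vp, of "\<beta> w" "\<beta> p"] w(2) by blast
      then have "adj EH (\<beta> p) (\<beta> w)"
        by (simp add: adj_sym)
      then have "w \<in> P \<union> Q"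
        using no_adj p(1) w(1) by blast
      moreover have "adj EH {v} (\<Union>(\<beta> ` P))"
        using adj_mono[OF vp, of "{v}" "\<Union>(\<beta> ` P)"] p(1) by blast
      ultimately show ?thesis
        using w by (auto simp: attachments_def)
    qed
  qed
  show ?thesis
    unfolding separation_def
  proof (intro conjI ballI)
    fix u v
    assume "u \<in> \<Union>(\<beta> ` P) \<union> attachments EH (\<Union>(\<beta> ` P)) (\<Union>(\<beta> ` Q)) - (VH - \<Union>(\<beta> ` P))"
      and "v \<in> VH - \<Union>(\<beta> ` P) - (\<Union>(\<beta> ` P) \<union> attachments EH (\<Union>(\<beta> ` P)) (\<Union>(\<beta> ` Q)))"
    then have "u \<in> \<Union>(\<beta> ` P)" "v \<in> VH" "v \<notin> \<Union>(\<beta> ` P)"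
      "v \<notin> attachments EH (\<Union>(\<beta> ` P)) (\<Union>(\<beta> ` Q))"
      using sub by (auto simp: attachments_def)
    then show "{u, v} \<notin> EH"
      using closed by blast
  qed (use sub in \<open>auto simp: attachments_def\<close>)
qed

lemma optimal_model_small_separation:
  assumes "finite Q" and P: "P = {p1, p2}"
    and edges: "\<And>q. q \<in> Q \<Longrightarrow> {q, p1} \<in> EG" "\<And>q. q \<in> Q \<Longrightarrow> {q, p2} \<in> EG"
    and no_adj: "\<And>p r. p \<in> P \<Longrightarrow> r \<in> VG - (P \<union> Q) \<Longrightarrow> \<not> adj EH (\<beta> p) (\<beta> r)"
    and unique: "\<And>q a1 a2. q \<in> Q \<Longrightarrow> a1 \<in> \<beta> q \<Longrightarrow> a2 \<in> \<beta> q \<Longrightarrow>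
      adj EH {a1} (\<beta> p1) \<Longrightarrow> adj EH {a2} (\<beta> p2) \<Longrightarrow> a1 = a2"
  obtains A B where "separation VH EH A B" "sep_order A B \<le> card Q"
    "\<Union>(\<beta> ` P) \<subseteq> A - B" "\<Union>(\<beta> ` (VG - (P \<union> Q))) \<subseteq> B - A"
proof -
  note model = optimal_model_minor_model
  have BP: "\<Union>(\<beta> ` P) = \<beta> p1 \<union> \<beta> p2"
    by (simp add: P)
  let ?Z = "attachments EH (\<beta> p1 \<union> \<beta> p2) (\<Union>(\<beta> ` Q))"
  let ?A = "\<beta> p1 \<union> \<beta> p2 \<union> ?Z" and ?B = "VH - (\<beta> p1 \<union> \<beta> p2)"
  have "card ?Z \<le> card Q"
  proof (rule card_attachments_UN_le[OF \<open>finite Q\<close>])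
    fix q
    assume q: "q \<in> Q"
    then have "finite (\<beta> q)"
      using PQ(3) minor_model_subset[OF model] finite_subset[OF _ fin] by blast
    moreover have "adj EH (\<beta> q) (\<beta> p1)" "adj EH (\<beta> q) (\<beta> p2)"
      using minor_model_edge[OF model edges(1)[OF q]] minor_model_edge[OF model edges(2)[OF q]]
      by auto
    ultimately show "card (attachments EH (\<beta> p1 \<union> \<beta> p2) (\<beta> q)) \<le> 1"
      using unique[OF q] by (intro card_attachments_le_1)
  qed
  moreover have "?Z \<subseteq> VH"
    using PQ(3) minor_model_subset[OF model] by (auto simp: attachments_def)
  then have "finite ?Z"
    using fin by (rule finite_subset)
  moreover have "?A \<inter> ?B \<subseteq> ?Z"
    by blast
  ultimately have ord: "sep_order ?A ?B \<le> card Q"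
    unfolding sep_order_def using card_mono[of ?Z "?A \<inter> ?B"] by linarith
  have "separation VH EH ?A ?B"
    using optimal_model_separation[OF no_adj] unfolding BP by blast
  moreover note ord
  moreover have "\<Union>(\<beta> ` P) \<subseteq> ?A - ?B"
    using PQ(2) minor_model_subset[OF model] unfolding BP by auto
  moreover have "\<beta> r \<subseteq> ?B - ?A" if r: "r \<in> VG - (P \<union> Q)" for r
  proof -
    have "\<beta> r \<inter> \<beta> u = {}" if "u \<in> P \<union> Q" for u
      using minor_model_disjoint[OF model] r that PQ by blast
    then show ?thesis
      using minor_model_subset[OF model] r P by (auto simp: attachments_def)
  qed
  then have "\<Union>(\<beta> ` (VG - (P \<union> Q))) \<subseteq> ?B - ?A"
    by (rule UN_least)
  ultimately show ?thesis
    by (rule that)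
qed

end

theorem lemma4p6:
  fixes V1 :: "'a set" and E1 :: "'a set set" and VH :: "'b set" and EH :: "'b set set"
    and p1 p2 q1 q2 q3 :: 'a and R :: "'a set"
  assumes G1: "simple_graph V1 E1"
    and H: "simple_graph VH EH"
    and w4c: "weakly_4_connected VH EH"
    and minor: "has_minor VH EH V1 E1"
    and P_def: "P = {p1, p2}" and Q_def: "Q = {q1, q2, q3}"
    and distP: "p1 \<noteq> p2" and distQ: "q1 \<noteq> q2" "q1 \<noteq> q3" "q2 \<noteq> q3"
    and part: "P \<union> Q \<union> R = V1" "P \<inter> Q = {}" "P \<inter> R = {}" "Q \<inter> R = {}"
    and PQ_edges: "\<forall>p\<in>P. \<forall>q\<in>Q. {p, q} \<in> E1"
    and Q_indep: "\<forall>q\<in>Q. \<forall>q'\<in>Q. {q, q'} \<notin> E1"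
    and R_card: "card R \<ge> 2"
    and sep: "separation V1 E1 (P \<union> Q) (Q \<union> R)"
    and sep_nontriv: "nontrivial_sep V1 (P \<union> Q) (Q \<union> R)"
    and sep_ord: "sep_order (P \<union> Q) (Q \<union> R) = 3"
  shows "(\<exists>p\<in>P. \<exists>r\<in>R. has_minor VH EH V1 (insert {p, r} E1))
       \<or> (\<exists>q\<in>Q. \<exists>N1 N2. valid_split E1 q N1 N2 \<and> p1 \<in> N1 \<and> p2 \<in> N2 \<and>
             has_minor VH EH (split_V V1 q) (split_E E1 q N1 N2))"
proof -
  have fin: "finite VH" and PQ: "P \<inter> Q = {}" "P \<subseteq> V1" "Q \<subseteq> V1"
    using H part by (auto simp: simple_graph_def)
  obtain \<beta>\<^sub>0 where "minor_model VH EH V1 E1 \<beta>\<^sub>0"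
    using minor by (auto simp: has_minor_iff_minor_model)
  then obtain \<beta> where opt: "optimal_model VH EH V1 E1 P Q \<beta>"
    using optimal_model_exists[OF fin PQ(2)] by blast
  then have model: "minor_model VH EH V1 E1 \<beta>"
    by (rule optimal_model_minor_model[OF _ fin PQ])
  have edges: "{q, p1} \<in> E1" "{q, p2} \<in> E1" if "q \<in> Q" for q
    using PQ_edges that P_def by (auto simp: insert_commute)
  consider (PR) p r where "p \<in> P" "r \<in> R" "adj EH (\<beta> p) (\<beta> r)"
    | (split) q a1 a2 where "q \<in> Q" "a1 \<in> \<beta> q" "a2 \<in> \<beta> q" "a1 \<noteq> a2"
        "adj EH {a1} (\<beta> p1)" "adj EH {a2} (\<beta> p2)"
    | (neither) "\<And>p r. p \<in> P \<Longrightarrow> r \<in> R \<Longrightarrow> \<not> adj EH (\<beta> p) (\<beta> r)"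
        "\<And>q a1 a2. q \<in> Q \<Longrightarrow> a1 \<in> \<beta> q \<Longrightarrow> a2 \<in> \<beta> q \<Longrightarrow>
           adj EH {a1} (\<beta> p1) \<Longrightarrow> adj EH {a2} (\<beta> p2) \<Longrightarrow> a1 = a2"
    by blast
  then show ?thesis
  proof cases
    case PR
    then show ?thesis
      using minor_model_insert_edge[OF model PR(3)] has_minor_iff_minor_model by blast
  next
    case split
    then show ?thesis
      using optimal_model_split_attachments[OF opt fin PQ G1 P_def distP _ edges] by blast
  next
    case neither
    have sizes: "R = V1 - (P \<union> Q)" "2 \<le> card P" "card Q = 3"
      using part distP distQ by (auto simp: P_def Q_def)
    obtain A B where "separation VH EH A B" "sep_order A B \<le> card Q"
      "\<Union>(\<beta> ` P) \<subseteq> A - B" "\<Union>(\<beta> ` R) \<subseteq> B - A"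
      using optimal_model_small_separation[OF opt fin PQ _ P_def edges] neither sizes(1)
      by (auto simp: Q_def)
    then show ?thesis
      using minor_model_no_small_separation[OF H w4c model, of A B P R] PQ sizes R_card part
      by auto
  qed
qed

end
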